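(* Let $D^+$ and $D^-$ be oriented link diagrams that are identical except at one crossing, which is positive in $D^+$ and negative in $D^-$. Let $D_0^+$ be the diagram obtained from $D^+$ by the $0$-smoothing of this crossing, with the orientation inherited from $D^+$ (it coincides, as an oriented diagram, with the $1$-smoothing $D_1^-$ of $D^-$ at that crossing, with orientation inherited from $D^-$). Let $D_0^-=D_1^+$ be the diagram obtained by the other smoothing of that crossing (the $1$-smoothing of $D^+$, equivalently the $0$-smoothing of $D^-$), equipped with one arbitrary fixed orientation. Put $c^+ = n_-(D_1^+)-n_-(D^+)$ and $c^- = n_-(D_0^-)-n_-(D^-)$, where $n_-$ denotes the number of negative crossings (so $c^+=c^-+1$). Then for all integers $i,j$ the sequence \[ 0 \to C^{i-2,j-3}(D_0^+) \xrightarrow{\psi_1} C^{i-2,j-4}(D^-) \xrightarrow{\phi} C^{i,j}(D^+) \xrightarrow{\psi_2} C^{i,j-1}(D_0^+) \to 0 \] is exact, where $\psi_1$ is the inclusion map of the short exact sequence $0\to C^{a,b+1}(D_1^-)\to C^{a,b}(D^-)\to C^{a-c^-,b-3c^--1}(D_0^-)\to 0$ (taken with $(a,b)=(i-2,j-4)$), $\psi_2$ is the projection map of the short exact sequence $0\to C^{i-c^+-1,j-3c^+-2}(D_1^+)\to C^{i,j}(D^+)\to C^{i,j-1}(D_0^+)\to 0$, and $\phi=\phi_2\circ\phi_1$ with $\phi_1: C^{i-2,j-4}(D^-)\to C^{(i-2)-c^-,(j-4)-3c^--1}(D_0^-)$ the projection of the first of these short exact sequences and $\phi_2: C^{i-c^+-1,j-3c^+-2}(D_0^-)\to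 C^{i,j}(D^+)$ the inclusion of the second (these two groups are equal since $c^+=c^-+1$ and $D_0^-=D_1^+$).
   Context: Khovanov chain complex over $\mathbb{Q}$: let $D$ be an oriented link diagram with $n$ crossings numbered $1,\dots,n$, $n_+$ positive and $n_-$ negative crossings. Each crossing has a $0$-smoothing and a $1$-smoothing (the standard Khovanov/Kauffman-bracket $A$- and $B$-smoothings). For $\alpha\in\{0,1\}^n$ let $r_\alpha$ be the number of $1$'s and $k_\alpha$ the number of circles of the corresponding full smoothing. Let $V$ be the graded $\mathbb{Q}$-vector space with basis $e,x$, $\deg e=1$, $\deg x=-1$; for a graded space $W$, $W\{l\}^m=W^{m-l}$. Set $V_\alpha=V^{\otimes k_\alpha}\{r_\alpha+n_+-2n_-\}$ and $C^{i,*}(D)=\bigoplus_{r_\alpha=i+n_-}V_\alpha$; an element $v$ of $V_\alpha$ (homogeneous of degree $\deg v$ in $V^{\otimes k_\alpha}$) lies in $C^{i,j}(D)$ with $i=r_\alpha-n_-$ and $j=\deg v+r_\alpha+n_+-2n_-$. The differential $d:C^{i,*}\to C^{i+1,*}$ is the sum over edges $\zeta:\alpha\to\alpha'$ of the cube (changing one $0$ to a $1$) of $(-1)^{\#\{1\text{'s to the left of the changed position}\}}d_\zeta$, where $d_\zeta$ is the identity on circles not touching the changed crossing and is $m$ (merging two circles) or $\Delta$ (splitting one circle), with $m(e\otimes e)=e$, $m(e\otimes x)=m(x\otimes e)=x$, $m(x\otimes x)=0$, $\Delta(e)=e\otimes x+x\otimes e$, $\Delta(x)=x\otimes x$. For a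 positive crossing, the states with that crossing $0$-smoothed give a quotient complex identified (with the indicated shifts) with $C(D_0^+)$ and those with it $1$-smoothed give a subcomplex identified with $C(D_1^+)$, yielding the short exact sequence $0\to C^{i-c^+-1,j-3c^+-2}(D_1^+)\to C^{i,j}(D^+)\to C^{i,j-1}(D_0^+)\to0$; for a negative crossing similarly $0\to C^{i,j+1}(D_1^-)\to C^{i,j}(D^-)\to C^{i-c^-,j-3c^--1}(D_0^-)\to0$, where the first map includes the $1$-smoothed states and the second projects to the $0$-smoothed states. *)

theory Defs
  imports Complex_Main
begin

text \<open>
A diagram has vertices 0,...,nv-1; each vertex has four positions 0,1,2,3 in
counterclockwise order.  The arcs of the diagram form a fixed-point free
involution on the set of positions; in addition there are loops
crossing-free circle components.  A vertex is either a crossing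
(Cross u: if u then the under strand joins positions 0 and 2, the over strand
joins 1 and 3; otherwise the under strand joins 1 and 3, the over strand 0 and 2)
or an already resolved vertex (Smoothed b: the two strands join positions
0-1 and 2-3 if b = False, and 0-3 and 1-2 if b = True).
An orientation is a map ori on positions: ori h means the strand enters the vertex at h.
\<close>

datatype vkind = Cross bool | Smoothed bool

record diag =
  nv    :: nat
  arc   :: "nat \<times> nat \<Rightarrow> nat \<times> nat"
  loops :: nat
  kind  :: "nat \<Rightarrow> vkind"

type_synonym orientation = "nat \<times> nat \<Rightarrow> bool"

definition pos :: "diag \<Rightarrow> (nat \<times> nat) set" where
  "pos D = {(v, p). v < nv D \<and> p < 4}"

definition is_cross :: "vkind \<Rightarrow> bool" where
  "is_cross k = (case k of Cross _ \<Rightarrow> True | Smoothed _ \<Rightarrow> False)"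

definition crossings :: "diag \<Rightarrow> nat set" where
  "crossings D = {v. v < nv D \<and> is_cross (kind D v)}"

definition partner :: "bool \<Rightarrow> nat \<Rightarrow> nat" where
  "partner b p = (if b then 3 - p else (if even p then p + 1 else p - 1))"

text \<open>pattern of the s-smoothing (s = False: 0-smoothing = Kauffman A-smoothing,
  s = True: 1-smoothing = B-smoothing) of a vertex of kind k\<close>
definition smooth_pattern :: "vkind \<Rightarrow> bool \<Rightarrow> bool" where
  "smooth_pattern k s = (case k of Cross u \<Rightarrow> (if u then s else \<not> s) | Smoothed b \<Rightarrow> b)"

definition rot :: "nat \<times> nat \<Rightarrow> nat \<times> nat" where
  "rot h = (fst h, (snd h + 1) mod 4)"

definition faces :: "diag \<Rightarrow> (nat \<times> nat) set set" where
  "faces D = {{((rot \<circ> arc D) ^^ k) h | k. True} | h. h \<in> pos D}"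

definition vadj :: "diag \<Rightarrow> (nat \<times> nat) set" where
  "vadj D = {(v, fst (arc D (v, p))) | v p. (v, p) \<in> pos D}"

definition components :: "diag \<Rightarrow> nat set set" where
  "components D = {(vadj D)\<^sup>* `` {v} | v. v < nv D}"

text \<open>the underlying 4-valent graph with its rotation system has genus 0
  (Euler: V - E + F = 2 per connected component, with E = 2V)\<close>
definition planar :: "diag \<Rightarrow> bool" where
  "planar D \<longleftrightarrow> card (faces D) = nv D + 2 * card (components D)"

definition arcs_ok :: "diag \<Rightarrow> bool" where
  "arcs_ok D \<longleftrightarrow> (\<forall>h \<in> pos D. arc D h \<in> pos D \<and> arc D h \<noteq> h \<and> arc D (arc D h) = h)"

definition link_diagram :: "diag \<Rightarrow> bool" where
  "link_diagram D \<longleftrightarrow> arcs_ok D \<and> planar D \<and> (\<forall>v < nv D. is_cross (kind D v))"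

definition is_orientation :: "diag \<Rightarrow> orientation \<Rightarrow> bool" where
  "is_orientation D ori \<longleftrightarrow>
     (\<forall>h \<in> pos D. ori (arc D h) \<noteq> ori h) \<and>
     (\<forall>v < nv D. case kind D v of
        Cross _ \<Rightarrow> (\<forall>p < 4. ori (v, p) \<noteq> ori (v, (p + 2) mod 4))
      | Smoothed b \<Rightarrow> (\<forall>p < 4. ori (v, p) \<noteq> ori (v, partner b p)))"

definition positive :: "diag \<Rightarrow> orientation \<Rightarrow> nat \<Rightarrow> bool" where
  "positive D ori v = (case kind D v of
      Cross u \<Rightarrow> (if u then ori (v, 0) = ori (v, 3) else ori (v, 1) = ori (v, 0))
    | Smoothed _ \<Rightarrow> False)"

definition nminus :: "diag \<Rightarrow> orientation \<Rightarrow> nat" where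
  "nminus D ori = card {v \<in> crossings D. \<not> positive D ori v}"

definition nplus :: "diag \<Rightarrow> orientation \<Rightarrow> nat" where
  "nplus D ori = card {v \<in> crossings D. positive D ori v}"

definition switch :: "diag \<Rightarrow> nat \<Rightarrow> diag" where
  "switch D c = D\<lparr>kind := (kind D)(c := (case kind D c of Cross u \<Rightarrow> Cross (\<not> u) | k \<Rightarrow> k))\<rparr>"

definition smooth :: "diag \<Rightarrow> nat \<Rightarrow> bool \<Rightarrow> diag" where
  "smooth D c s = D\<lparr>kind := (kind D)(c := Smoothed (smooth_pattern (kind D c) s))\<rparr>"

type_synonym state = "nat \<Rightarrow> bool"  \<comment> \<open>True = 1-smoothing\<close>
type_synonym circle = "(nat \<times> nat) set + nat"
type_synonym gen = "state \<times> (circle \<Rightarrow> bool)"  \<comment> \<open>label True = x, False = e\<close>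

definition resolved :: "diag \<Rightarrow> state \<Rightarrow> nat \<Rightarrow> bool" where
  "resolved D s v = smooth_pattern (kind D v) (s v)"

definition cstep :: "diag \<Rightarrow> state \<Rightarrow> ((nat \<times> nat) \<times> (nat \<times> nat)) set" where
  "cstep D s = {(h, arc D h) | h. h \<in> pos D} \<union>
               {((v, p), (v, partner (resolved D s v) p)) | v p. (v, p) \<in> pos D}"

definition circles :: "diag \<Rightarrow> state \<Rightarrow> circle set" where
  "circles D s = (\<lambda>h. Inl ((cstep D s)\<^sup>* `` {h})) ` pos D \<union> Inr ` {..<loops D}"

definition valid_gen :: "diag \<Rightarrow> gen \<Rightarrow> bool" where
  "valid_gen D g \<longleftrightarrow> (\<forall>v. fst g v \<longrightarrow> v \<in> crossings D) \<and> (\<forall>C. snd g C \<longrightarrow> C \<in> circles D (fst g))"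

definition rdeg :: "gen \<Rightarrow> nat" where
  "rdeg g = card {v. fst g v}"

text \<open>degree in V^{\<otimes>k}: (#e) - (#x)\<close>
definition vdeg :: "diag \<Rightarrow> gen \<Rightarrow> int" where
  "vdeg D g = int (card (circles D (fst g))) - 2 * int (card {C. snd g C})"

definition hdeg :: "diag \<Rightarrow> orientation \<Rightarrow> gen \<Rightarrow> int" where
  "hdeg D ori g = int (rdeg g) - int (nminus D ori)"

definition qdeg :: "diag \<Rightarrow> orientation \<Rightarrow> gen \<Rightarrow> int" where
  "qdeg D ori g = vdeg D g + int (rdeg g) + int (nplus D ori) - 2 * int (nminus D ori)"

text \<open>C^{i,j}(D) as the Q-vector space of rational combinations of the generators
  of bidegree (i,j)\<close>
definition KhC :: "diag \<Rightarrow> orientation \<Rightarrow> int \<Rightarrow> int \<Rightarrow> (gen \<Rightarrow> rat) set" where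
  "KhC D ori i j = {f. \<forall>g. f g \<noteq> 0 \<longrightarrow> valid_gen D g \<and> hdeg D ori g = i \<and> qdeg D ori g = j}"

text \<open>inclusion of C(D_1) (states with crossing c 1-smoothed) into C(D), with the sign
  making it a chain map for the given crossing numbering\<close>
definition incl :: "nat \<Rightarrow> (gen \<Rightarrow> rat) \<Rightarrow> (gen \<Rightarrow> rat)" where
  "incl c f = (\<lambda>(s, l). if s c then (-1) ^ card {v. c < v \<and> s v} * f (s(c := False), l) else 0)"

definition proj :: "nat \<Rightarrow> (gen \<Rightarrow> rat) \<Rightarrow> (gen \<Rightarrow> rat)" where
  "proj c f = (\<lambda>(s, l). if s c then 0 else f (s, l))"

definition exact4 :: "(gen \<Rightarrow> rat) set \<Rightarrow> (gen \<Rightarrow> rat) set \<Rightarrow> (gen \<Rightarrow> rat) set \<Rightarrow> (gen \<Rightarrow> rat) set \<Rightarrow>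
    ((gen \<Rightarrow> rat) \<Rightarrow> (gen \<Rightarrow> rat)) \<Rightarrow> ((gen \<Rightarrow> rat) \<Rightarrow> (gen \<Rightarrow> rat)) \<Rightarrow> ((gen \<Rightarrow> rat) \<Rightarrow> (gen \<Rightarrow> rat)) \<Rightarrow> bool" where
  "exact4 A B C E f g h \<longleftrightarrow>
     f ` A \<subseteq> B \<and> g ` B \<subseteq> C \<and> h ` C \<subseteq> E \<and>
     {a \<in> A. f a = (\<lambda>_. 0)} = {\<lambda>_. 0} \<and>
     {b \<in> B. g b = (\<lambda>_. 0)} = f ` A \<and>
     {x \<in> C. h x = (\<lambda>_. 0)} = g ` B \<and>
     h ` C = E"

end

theory Submission
  imports Defs
begin

text \<open>Split the generators of C(D^+) and of C(D^-) according to the smoothing of the crossing c.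
  Clearing the bit of c identifies the generators of D^+ with c 0-smoothed with those of D_0^+,
  and those with c 1-smoothed with those of D_1^+; for D^- the roles of the two smoothings are
  exchanged, since D_0^- = D_1^+ and D_1^- = D_0^+. Only the bidegrees shift, by amounts read off
  from r, n_+ and n_-. So on the level of generators
  C(D^-) = C(D_1^+) \<oplus> C(D_0^+)[shifted] and C(D^+) = C(D_0^+)[shifted] \<oplus> C(D_1^+)[shifted],
  with proj the projection onto the first summand and incl (a signed bit flip) an isomorphism
  onto the second. Gluing the two split sequences along C(D_1^+) gives the exact
  four-term sequence.\<close>

definition supported :: "'a set \<Rightarrow> ('a \<Rightarrow> 'b::zero) set" where
  "supported S = {f. \<forall>x. f x \<noteq> 0 \<longrightarrow> x \<in> S}"

lemma supported_mono: "S \<subseteq> T \<Longrightarrow> supported S \<subseteq> supported T"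
  by (auto simp: supported_def)

lemma supportedD: "f \<in> supported S \<Longrightarrow> f x \<noteq> 0 \<Longrightarrow> x \<in> S"
  by (simp add: supported_def)

definition kh_generators :: "diag \<Rightarrow> orientation \<Rightarrow> int \<Rightarrow> int \<Rightarrow> gen set" where
  "kh_generators X ori i j = {g. valid_gen X g \<and> hdeg X ori g = i \<and> qdeg X ori g = j}"

lemma KhC_eq_supported: "KhC X ori i j = supported (kh_generators X ori i j)"
  by (auto simp: KhC_def supported_def kh_generators_def)

definition lift_gens :: "nat \<Rightarrow> gen set \<Rightarrow> gen set" where
  "lift_gens c T = {(s, l). s c \<and> (s(c := False), l) \<in> T}"

lemma proj_apply: "proj c f g = (if fst g c then 0 else f g)"
  by (cases g) (simp add: proj_def)

definition incl_sign :: "nat \<Rightarrow> state \<Rightarrow> rat" where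
  "incl_sign c s = (-1) ^ card {v. c < v \<and> s v}"

lemma incl_sign_upd [simp]: "incl_sign c (s(c := b)) = incl_sign c s"
proof -
  have "{v. c < v \<and> (s(c := b)) v} = {v. c < v \<and> s v}" by auto
  then show ?thesis by (simp add: incl_sign_def)
qed

lemma incl_sign_nonzero [simp]: "incl_sign c s \<noteq> 0"
  by (simp add: incl_sign_def)

lemma incl_sign_square: "incl_sign c s * incl_sign c s = 1"
  by (simp add: incl_sign_def flip: power_add)

lemma incl_apply: "incl c f (s, l) = (if s c then incl_sign c s * f (s(c := False), l) else 0)"
  by (simp add: incl_def incl_sign_def)

lemma proj_image_supported: "proj c ` supported S = supported {g \<in> S. \<not> fst g c}"
proof
  show "proj c ` supported S \<subseteq> supported {g \<in> S. \<not> fst g c}"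
    by (auto simp: supported_def proj_apply split: if_splits)
  show "supported {g \<in> S. \<not> fst g c} \<subseteq> proj c ` supported S"
  proof
    fix f :: "gen \<Rightarrow> rat" assume f: "f \<in> supported {g \<in> S. \<not> fst g c}"
    have "proj c f = f"
    proof
      fix g show "proj c f g = f g"
        using supportedD[OF f, of g] by (auto simp: proj_apply)
    qed
    moreover have "f \<in> supported S"
      using f supported_mono[of "{g \<in> S. \<not> fst g c}" S] by blast
    ultimately show "f \<in> proj c ` supported S" by (rule image_eqI[OF sym])
  qed
qed

lemma proj_kernel_supported:
  "{f \<in> supported S. proj c f = (\<lambda>_. 0)} = supported {g \<in> S. fst g c}"
  by (auto simp: supported_def proj_apply fun_eq_iff)

lemma incl_eq_zero_iff:
  assumes "f \<in> supported T" and "T \<subseteq> {g. \<not> fst g c}"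
  shows "incl c f = (\<lambda>_. 0) \<longleftrightarrow> f = (\<lambda>_. 0)"
proof
  assume zero: "incl c f = (\<lambda>_. 0)"
  show "f = (\<lambda>_. 0)"
  proof
    fix g :: gen
    obtain s l where g: "g = (s, l)" by fastforce
    show "f g = 0"
    proof (cases "s c")
      case True
      then have "g \<notin> T" using assms(2) g by auto
      then show ?thesis using supportedD[OF assms(1), of g] by blast
    next
      case False
      then have "s(c := True, c := False) = s" by (simp add: fun_upd_idem)
      then have "incl c f (s(c := True), l) = incl_sign c s * f g"
        by (simp add: incl_apply g)
      then show ?thesis using zero by (simp add: fun_eq_iff)
    qed
  qed
qed (simp add: incl_def fun_eq_iff)

lemma incl_image_supported:
  assumes "T \<subseteq> {g. \<not> fst g c}"
  shows "incl c ` supported T = supported (lift_gens c T)"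
proof
  show "incl c ` supported T \<subseteq> supported (lift_gens c T)"
    by (auto simp: supported_def lift_gens_def incl_apply split: if_splits)
  show "supported (lift_gens c T) \<subseteq> incl c ` supported T"
  proof
    fix h :: "gen \<Rightarrow> rat" assume h: "h \<in> supported (lift_gens c T)"
    define f where "f = (\<lambda>(s, l). if s c then 0 else incl_sign c s * h (s(c := True), l))"
    have "f \<in> supported T"
    proof (clarsimp simp: supported_def)
      fix s l assume "f (s, l) \<noteq> 0"
      then have "\<not> s c" "h (s(c := True), l) \<noteq> 0" by (auto simp: f_def split: if_splits)
      then have "(s(c := True), l) \<in> lift_gens c T" using supportedD[OF h] by blast
      with \<open>\<not> s c\<close> show "(s, l) \<in> T" by (simp add: lift_gens_def fun_upd_idem)
    qed
    moreover have "incl c f = h"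
    proof (rule ext, clarify)
      fix s l
      show "incl c f (s, l) = h (s, l)"
      proof (cases "s c")
        case True
        then have "s(c := False, c := True) = s" by (simp add: fun_upd_idem)
        with True show ?thesis
          by (simp add: incl_apply f_def mult.assoc[symmetric] incl_sign_square)
      next
        case False
        then show ?thesis using h by (auto simp: incl_apply supported_def lift_gens_def)
      qed
    qed
    ultimately show "h \<in> incl c ` supported T" by blast
  qed
qed

lemma exact4_supported:
  assumes A: "A \<subseteq> {g. \<not> fst g c}" and M: "M \<subseteq> {g. \<not> fst g c}"
    and B0: "{g \<in> B. \<not> fst g c} = M" and B1: "{g \<in> B. fst g c} = lift_gens c A"
    and C0: "{g \<in> C. \<not> fst g c} = E" and C1: "{g \<in> C. fst g c} = lift_gens c M"
  shows "exact4 (supported A) (supported B) (supported C) (supported E)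
           (incl c) (incl c \<circ> proj c) (proj c)"
proof -
  have incl_A: "incl c ` supported A = {b \<in> supported B. proj c b = (\<lambda>_. 0)}"
    using incl_image_supported[OF A] proj_kernel_supported B1 by simp
  have incl_M: "incl c ` supported M = {x \<in> supported C. proj c x = (\<lambda>_. 0)}"
    using incl_image_supported[OF M] proj_kernel_supported C1 by simp
  have proj_B: "proj c ` supported B = supported M"
    using proj_image_supported B0 by simp
  have proj_C: "proj c ` supported C = supported E"
    using proj_image_supported C0 by simp
  have ker_B: "{b \<in> supported B. (incl c \<circ> proj c) b = (\<lambda>_. 0)} =
      {b \<in> supported B. proj c b = (\<lambda>_. 0)}"
  proof (intro Collect_cong conj_cong refl)
    fix b :: "gen \<Rightarrow> rat" assume "b \<in> supported B"
    then have "proj c b \<in> supported M" using proj_B by blast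
    then show "(incl c \<circ> proj c) b = (\<lambda>_. 0) \<longleftrightarrow> proj c b = (\<lambda>_. 0)"
      using incl_eq_zero_iff[OF _ M] by simp
  qed
  have ker_A: "{a \<in> supported A. incl c a = (\<lambda>_. 0)} = {\<lambda>_. 0}"
    using incl_eq_zero_iff[OF _ A] by (auto simp: supported_def)
  show ?thesis
    unfolding exact4_def
  proof (intro conjI)
    show "incl c ` supported A \<subseteq> supported B"
      unfolding incl_A by blast
    show "(incl c \<circ> proj c) ` supported B \<subseteq> supported C"
      unfolding image_comp[symmetric] proj_B incl_M by blast
    show "proj c ` supported C \<subseteq> supported E"
      unfolding proj_C ..
    show "{a \<in> supported A. incl c a = (\<lambda>_. 0)} = {\<lambda>_. 0}"
      by (rule ker_A)
    show "{b \<in> supported B. (incl c \<circ> proj c) b = (\<lambda>_. 0)} = incl c ` supported A"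
      unfolding ker_B incl_A ..
    show "{x \<in> supported C. proj c x = (\<lambda>_. 0)} = (incl c \<circ> proj c) ` supported B"
      unfolding image_comp[symmetric] proj_B incl_M ..
    show "proj c ` supported C = supported E"
      by (rule proj_C)
  qed
qed

lemma crossings_switch: "crossings (switch X c) = crossings X"
  by (auto simp: crossings_def switch_def is_cross_def split: vkind.splits)

lemma crossings_smooth: "crossings (smooth X c b) = crossings X - {c}"
  by (auto simp: crossings_def smooth_def is_cross_def)

lemma finite_crossings: "finite (crossings X)"
  by (rule finite_subset[of _ "{..<nv X}"]) (auto simp: crossings_def)

lemma smooth_switch:
  assumes "c \<in> crossings X"
  shows "smooth (switch X c) c b = smooth X c (\<not> b)"
proof -
  obtain u where "kind X c = Cross u"
    using assms by (auto simp: crossings_def is_cross_def split: vkind.splits)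
  then show ?thesis by (simp add: smooth_def switch_def smooth_pattern_def)
qed

lemma resolved_smooth_state: "resolved (smooth X c (s c)) (s(c := False)) = resolved X s"
  by (auto simp: fun_eq_iff resolved_def smooth_def smooth_pattern_def)

lemma circles_smooth_state: "circles (smooth X c (s c)) (s(c := False)) = circles X s"
proof -
  have "pos (smooth X c (s c)) = pos X" by (simp add: pos_def smooth_def)
  moreover have "cstep (smooth X c (s c)) (s(c := False)) = cstep X s"
    by (simp add: cstep_def pos_def resolved_smooth_state) (simp add: smooth_def)
  ultimately show ?thesis by (simp add: circles_def smooth_def)
qed

lemma valid_gen_smooth_state:
  assumes "c \<in> crossings X"
  shows "valid_gen (smooth X c (s c)) (s(c := False), l) \<longleftrightarrow> valid_gen X (s, l)"
  using assms by (auto simp: valid_gen_def crossings_smooth circles_smooth_state)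

lemma rdeg_smooth_state:
  assumes "finite {v. s v}"
  shows "rdeg (s, l) = rdeg (s(c := False), l') + of_bool (s c)"
proof -
  have "{v. s v} = {v. (s(c := False)) v} \<union> (if s c then {c} else {})" by auto
  then show ?thesis using assms by (simp add: rdeg_def)
qed

lemma nplus_eq_card_minus_nminus: "int (nplus X ori) = int (card (crossings X)) - int (nminus X ori)"
proof -
  have "card (crossings X) = nplus X ori + nminus X ori"
    unfolding nplus_def nminus_def using finite_crossings
    by (subst card_Un_disjoint[symmetric]) (auto intro: arg_cong[where f = card])
  then show ?thesis by simp
qed

lemma kh_generators_smooth_state:
  fixes s :: state and ori ori' :: orientation
  assumes "c \<in> crossings X"
  defines "k \<equiv> int (nminus (smooth X c (s c)) ori') - int (nminus X ori)"
  shows "(s(c := False), l) \<in> kh_generators (smooth X c (s c)) ori'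
            (i - of_bool (s c) - k) (j - of_bool (s c) - 1 - 3 * k)
         \<longleftrightarrow> (s, l) \<in> kh_generators X ori i j"
proof (cases "valid_gen X (s, l)")
  case True
  then have "finite {v. s v}"
    by (auto simp: valid_gen_def intro: finite_subset[OF _ finite_crossings])
  then have "rdeg (s, l) = rdeg (s(c := False), l) + of_bool (s c)"
    by (rule rdeg_smooth_state)
  moreover have "card (crossings (smooth X c (s c))) = card (crossings X) - 1"
    using assms(1) by (simp add: crossings_smooth finite_crossings)
  moreover have "card (crossings X) > 0"
    using assms(1) by (auto simp: card_gt_0_iff finite_crossings)
  \<comment> \<open>The smoothing loses the crossing c and, if it was 1-smoothed, one unit of r;
      n_- changes by k, and n_+ is the number of crossings minus n_-.\<close>
  ultimately show ?thesis
    using True valid_gen_smooth_state[OF assms(1)]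
    by (auto simp: kh_generators_def hdeg_def qdeg_def vdeg_def nplus_eq_card_minus_nminus k_def
        circles_smooth_state of_nat_diff)
next
  case False
  then show ?thesis
    using valid_gen_smooth_state[OF assms(1)] by (simp add: kh_generators_def)
qed

lemma kh_generators_smooth_subset: "kh_generators (smooth X c b) ori i j \<subseteq> {g. \<not> fst g c}"
  by (auto simp: kh_generators_def valid_gen_def crossings_smooth)

lemma kh_generators_0_smoothed:
  fixes ori ori' :: orientation
  assumes "c \<in> crossings X"
  defines "k \<equiv> int (nminus (smooth X c False) ori') - int (nminus X ori)"
  shows "{g \<in> kh_generators X ori i j. \<not> fst g c} =
           kh_generators (smooth X c False) ori' (i - k) (j - 1 - 3 * k)"
proof (intro set_eqI iffI)
  fix g assume "g \<in> {g \<in> kh_generators X ori i j. \<not> fst g c}"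
  then show "g \<in> kh_generators (smooth X c False) ori' (i - k) (j - 1 - 3 * k)"
    using kh_generators_smooth_state[OF assms(1), where s = "fst g" and l = "snd g"]
    by (simp add: k_def fun_upd_idem)
next
  fix g assume g: "g \<in> kh_generators (smooth X c False) ori' (i - k) (j - 1 - 3 * k)"
  then have "\<not> fst g c" using kh_generators_smooth_subset by blast
  then show "g \<in> {g \<in> kh_generators X ori i j. \<not> fst g c}"
    using g kh_generators_smooth_state[OF assms(1), where s = "fst g" and l = "snd g"]
    by (simp add: k_def fun_upd_idem)
qed

lemma kh_generators_1_smoothed:
  fixes ori ori' :: orientation
  assumes "c \<in> crossings X"
  defines "k \<equiv> int (nminus (smooth X c True) ori') - int (nminus X ori)"
  shows "{g \<in> kh_generators X ori i j. fst g c} =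
           lift_gens c (kh_generators (smooth X c True) ori' (i - 1 - k) (j - 2 - 3 * k))"
proof (intro set_eqI iffI)
  fix g assume "g \<in> {g \<in> kh_generators X ori i j. fst g c}"
  then show "g \<in> lift_gens c (kh_generators (smooth X c True) ori' (i - 1 - k) (j - 2 - 3 * k))"
    using kh_generators_smooth_state[OF assms(1), where s = "fst g" and l = "snd g"]
    by (auto simp: k_def lift_gens_def algebra_simps)
next
  fix g assume g: "g \<in> lift_gens c (kh_generators (smooth X c True) ori' (i - 1 - k) (j - 2 - 3 * k))"
  then show "g \<in> {g \<in> kh_generators X ori i j. fst g c}"
    using kh_generators_smooth_state[OF assms(1), where s = "fst g" and l = "snd g"]
    by (auto simp: k_def lift_gens_def algebra_simps)
qed

lemma positive_smooth: "positive (smooth X c b) ori v \<longleftrightarrow> v \<noteq> c \<and> positive X ori v"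
  by (simp add: positive_def smooth_def)

lemma positive_switch:
  assumes "is_orientation X ori" and "c \<in> crossings X"
  shows "positive (switch X c) ori v \<longleftrightarrow> (if v = c then \<not> positive X ori c else positive X ori v)"
proof (cases "v = c")
  case False
  then show ?thesis by (simp add: positive_def switch_def)
next
  case True
  obtain u where u: "kind X c = Cross u"
    using assms(2) by (auto simp: crossings_def is_cross_def split: vkind.splits)
  have "c < nv X" using assms(2) by (simp add: crossings_def)
  have "\<forall>v < nv X. case kind X v of
      Cross _ \<Rightarrow> (\<forall>p < 4. ori (v, p) \<noteq> ori (v, (p + 2) mod 4))
    | Smoothed b \<Rightarrow> (\<forall>p < 4. ori (v, p) \<noteq> ori (v, partner b p))"
    using assms(1) unfolding is_orientation_def by (rule conjunct2)
  from this[rule_format, OF \<open>c < nv X\<close>] u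
  have "\<forall>p < 4. ori (c, p) \<noteq> ori (c, (p + 2) mod 4)" by (simp only: vkind.case)
  from this[rule_format, of 1] have "ori (c, 1) \<noteq> ori (c, 3)" by simp
  with u True show ?thesis by (cases u) (auto simp: positive_def switch_def)
qed

lemma nminus_smooth:
  assumes "positive X ori c"
  shows "nminus (smooth X c b) ori = nminus X ori"
proof -
  have "{v \<in> crossings (smooth X c b). \<not> positive (smooth X c b) ori v} =
        {v \<in> crossings X. \<not> positive X ori v}"
    using assms by (auto simp: crossings_smooth positive_smooth)
  then show ?thesis by (simp add: nminus_def)
qed

lemma nminus_switch:
  assumes "is_orientation X ori" and "c \<in> crossings X" and "positive X ori c"
  shows "nminus (switch X c) ori = Suc (nminus X ori)"
proof -
  have "{v \<in> crossings (switch X c). \<not> positive (switch X c) ori v} =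
        insert c {v \<in> crossings X. \<not> positive X ori v}"
    using assms by (auto simp: crossings_switch positive_switch)
  moreover have "c \<notin> {v \<in> crossings X. \<not> positive X ori v}" using assms(3) by simp
  ultimately show ?thesis by (simp add: nminus_def finite_crossings)
qed

theorem mainTheorem1:
  fixes D :: diag and c :: nat and ori ori0 :: orientation and i j :: int
  assumes "link_diagram D" and "is_orientation D ori"
    and "c \<in> crossings D" and "positive D ori c"
    and "is_orientation (smooth (switch D c) c False) ori0"
  shows
    "let Dp = D; Dm = switch D c; D0p = smooth D c False;
         D1p = smooth D c True; D0m = smooth (switch D c) c False;
         cp = int (nminus D1p ori0) - int (nminus Dp ori);
         cm = int (nminus D0m ori0) - int (nminus Dm ori)
     in cp = cm + 1
      \<and> D1p = D0m
      \<and> KhC D1p ori0 (i - cp - 1) (j - 3 * cp - 2) = KhC D0m ori0 ((i - 2) - cm) ((j - 4) - 3 * cm - 1)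
      \<and> proj c ` KhC Dm ori (i - 2) (j - 4) \<subseteq> KhC D0m ori0 ((i - 2) - cm) ((j - 4) - 3 * cm - 1)
      \<and> incl c ` KhC D1p ori0 (i - cp - 1) (j - 3 * cp - 2) \<subseteq> KhC Dp ori i j
      \<and> exact4 (KhC D0p ori (i - 2) (j - 3)) (KhC Dm ori (i - 2) (j - 4))
               (KhC Dp ori i j) (KhC D0p ori i (j - 1))
               (incl c) (incl c \<circ> proj c) (proj c)"
proof -
  have c_Dm: "c \<in> crossings (switch D c)" using assms(3) by (simp add: crossings_switch)
  have D0m: "smooth (switch D c) c False = smooth D c True"
    and D1m: "smooth (switch D c) c True = smooth D c False"
    using smooth_switch[OF assms(3)] by simp_all
  have nminus_Dm: "int (nminus (switch D c) ori) = int (nminus D ori) + 1"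
    using nminus_switch[OF assms(2-4)] by simp
  have nminus_D0p: "nminus (smooth D c False) ori = nminus D ori"
    using nminus_smooth[OF assms(4)] .
  define cp where "cp = int (nminus (smooth D c True) ori0) - int (nminus D ori)"
  let ?A = "kh_generators (smooth D c False) ori (i - 2) (j - 3)"
  let ?B = "kh_generators (switch D c) ori (i - 2) (j - 4)"
  let ?C = "kh_generators D ori i j"
  let ?E = "kh_generators (smooth D c False) ori i (j - 1)"
  let ?M = "kh_generators (smooth D c True) ori0 (i - cp - 1) (j - 3 * cp - 2)"
  have B0: "{g \<in> ?B. \<not> fst g c} = ?M"
    using kh_generators_0_smoothed[OF c_Dm, where ori' = ori0 and ori = ori and i = "i - 2" and j = "j - 4"]
    by (simp add: D0m nminus_Dm cp_def algebra_simps)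
  have B1: "{g \<in> ?B. fst g c} = lift_gens c ?A"
    using kh_generators_1_smoothed[OF c_Dm, where ori' = ori and ori = ori and i = "i - 2" and j = "j - 4"]
    by (simp add: D1m nminus_Dm nminus_D0p algebra_simps)
  have C0: "{g \<in> ?C. \<not> fst g c} = ?E"
    using kh_generators_0_smoothed[OF assms(3), where ori' = ori and ori = ori and i = i and j = j]
    by (simp add: nminus_D0p)
  have C1: "{g \<in> ?C. fst g c} = lift_gens c ?M"
    using kh_generators_1_smoothed[OF assms(3), where ori' = ori0 and ori = ori and i = i and j = j]
    by (simp add: cp_def algebra_simps)
  have cm: "int (nminus (smooth D c True) ori0) - int (nminus (switch D c) ori) = cp - 1"
    by (simp add: cp_def nminus_Dm)
  have idx: "i - 2 - (cp - 1) = i - cp - 1" "j - 4 - 3 * (cp - 1) - 1 = j - 3 * cp - 2"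
    by simp_all
  have "exact4 (supported ?A) (supported ?B) (supported ?C) (supported ?E)
          (incl c) (incl c \<circ> proj c) (proj c)"
    by (rule exact4_supported[OF _ _ B0 B1 C0 C1]) (rule kh_generators_smooth_subset)+
  moreover have "proj c ` supported ?B \<subseteq> supported ?M"
    unfolding proj_image_supported B0 ..
  moreover have "incl c ` supported ?M \<subseteq> supported ?C"
    unfolding incl_image_supported[OF kh_generators_smooth_subset] C1[symmetric]
    by (rule supported_mono) blast
  ultimately show ?thesis
    unfolding Let_def KhC_eq_supported D0m cp_def[symmetric] cm idx by simp
qed

end
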